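(* Let $a>0$, $\alpha\in[0,1)$ and $f\in\mathcal C_a$. Then $\mathrm{Sh}_\alpha(\mathrm{gr}(f))=\mathrm{gr}(\mathrm{Sh}_\alpha(f))$.
   Context: $\mathcal C_a$ is the set of $C^1$ functions $f:\mathbb R\to\mathbb R$ that are even, satisfy $f(s)=|s|$ for $|s|\ge a$ and are strictly convex on $[-a,a]$. Shaking of functions: for $f\in\mathcal C_a$ and $\alpha\in[0,1)$, put $F_\alpha(s)=f(s)-\alpha s$, $x_\alpha^+=(f')^{-1}(\alpha)\in[0,a)$ (inverse of $f':[-a,a]\to[-1,1]$); $F_\alpha$ decreases on $(-\infty,x_\alpha^+]$ and increases on $[x_\alpha^+,\infty)$. Let $F_\alpha^{-1}$ be the inverse of $F_\alpha|_{[x_\alpha^+,\infty)}$, $\phi=F_\alpha^{-1}\circ F_\alpha$, $\delta_x=(1-\alpha)^{-1}F_\alpha(x)-\phi(x)$, $s_\alpha=x_\alpha^++\delta_{x_\alpha^+}$; $x\mapsto x+\delta_x$ is an increasing bijection $(-\infty,x_\alpha^+]\to(-\infty,s_\alpha]$ with inverse $\tau$. Define $\mathrm{Sh}_\alpha(f)(x)=\alpha x+F_\alpha(\tau(x))$ for $x\le s_\alpha$ and $=x$ for $x>s_\alpha$. Graphs: let $\mathcal P$ be the set of continuous $g:\mathbb R\to\mathbb R$ with $g(x)\ge|x|$ for all $x$, $g(x)=|x|$ for $|x|$ large, and $g(x_0)\ne|x_0|$ for some $x_0$. For $g\in\mathcal P$ let $a_g=\inf\{x:g(x)\ne|x|\}$,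 $b_g=\sup\{x:g(x)\ne|x|\}$ and $\mathrm{gr}(g)=\{(x,y)\in[a_g,b_g]\times\mathbb R_{\ge0}:|x|\le y\le g(x)\}$ (both $f$ and $\mathrm{Sh}_\alpha(f)$ lie in $\mathcal P$). Shaking of sets: let $D$ be the line $y=-x$ and $v_\alpha$ the unit vector positively collinear to $(1,\alpha)$. For compact $K\subseteq\mathbb R^2$, $\mathrm{Sh}_\alpha(K)=\bigcup_{p\in D}K^p$, where $K^p=\emptyset$ if $K\cap(p+\mathbb Rv_\alpha)=\emptyset$ and otherwise $K^p$ is the segment from $p$ to $p+|K\cap(p+\mathbb Rv_\alpha)|\,v_\alpha$, $|\cdot|$ denoting one-dimensional Lebesgue measure on the line. *)

theory Defs
  imports "HOL-Analysis.Analysis"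
begin

definition strictly_convex_on :: "real set \<Rightarrow> (real \<Rightarrow> real) \<Rightarrow> bool" where
  "strictly_convex_on S f \<longleftrightarrow>
     (\<forall>x\<in>S. \<forall>y\<in>S. \<forall>t::real. x \<noteq> y \<and> 0 < t \<and> t < 1 \<longrightarrow>
        f (t * x + (1 - t) * y) < t * f x + (1 - t) * f y)"

definition classC :: "real \<Rightarrow> (real \<Rightarrow> real) \<Rightarrow> bool" where
  "classC a f \<longleftrightarrow> f C1_differentiable_on UNIV \<and> (\<forall>s. f (- s) = f s)
     \<and> (\<forall>s. \<bar>s\<bar> \<ge> a \<longrightarrow> f s = \<bar>s\<bar>) \<and> strictly_convex_on {-a..a} f"

definition shF :: "real \<Rightarrow> (real \<Rightarrow> real) \<Rightarrow> real \<Rightarrow> real" where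
  "shF \<alpha> f s = f s - \<alpha> * s"

definition xplus :: "real \<Rightarrow> real \<Rightarrow> (real \<Rightarrow> real) \<Rightarrow> real" where
  "xplus a \<alpha> f = (THE x. x \<in> {-a..a} \<and> deriv f x = \<alpha>)"

definition shFinv :: "real \<Rightarrow> real \<Rightarrow> (real \<Rightarrow> real) \<Rightarrow> real \<Rightarrow> real" where
  "shFinv a \<alpha> f y = (THE z. z \<ge> xplus a \<alpha> f \<and> shF \<alpha> f z = y)"

definition shPhi :: "real \<Rightarrow> real \<Rightarrow> (real \<Rightarrow> real) \<Rightarrow> real \<Rightarrow> real" where
  "shPhi a \<alpha> f x = shFinv a \<alpha> f (shF \<alpha> f x)"

definition shDelta :: "real \<Rightarrow> real \<Rightarrow> (real \<Rightarrow> real) \<Rightarrow> real \<Rightarrow> real" where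
  "shDelta a \<alpha> f x = shF \<alpha> f x / (1 - \<alpha>) - shPhi a \<alpha> f x"

definition shS :: "real \<Rightarrow> real \<Rightarrow> (real \<Rightarrow> real) \<Rightarrow> real" where
  "shS a \<alpha> f = xplus a \<alpha> f + shDelta a \<alpha> f (xplus a \<alpha> f)"

definition shTau :: "real \<Rightarrow> real \<Rightarrow> (real \<Rightarrow> real) \<Rightarrow> real \<Rightarrow> real" where
  "shTau a \<alpha> f y = (THE x. x \<le> xplus a \<alpha> f \<and> x + shDelta a \<alpha> f x = y)"

definition shake_fun :: "real \<Rightarrow> real \<Rightarrow> (real \<Rightarrow> real) \<Rightarrow> real \<Rightarrow> real" where
  "shake_fun a \<alpha> f x =
     (if x \<le> shS a \<alpha> f then \<alpha> * x + shF \<alpha> f (shTau a \<alpha> f x) else x)"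

definition a_of :: "(real \<Rightarrow> real) \<Rightarrow> real" where
  "a_of g = Inf {x. g x \<noteq> \<bar>x\<bar>}"

definition b_of :: "(real \<Rightarrow> real) \<Rightarrow> real" where
  "b_of g = Sup {x. g x \<noteq> \<bar>x\<bar>}"

definition gr :: "(real \<Rightarrow> real) \<Rightarrow> (real \<times> real) set" where
  "gr g = {(x, y). a_of g \<le> x \<and> x \<le> b_of g \<and> 0 \<le> y \<and> \<bar>x\<bar> \<le> y \<and> y \<le> g x}"

definition lineD :: "(real \<times> real) set" where
  "lineD = {(t, - t) | t. True}"

definition vdir :: "real \<Rightarrow> real \<times> real" where
  "vdir \<alpha> = (1 / norm ((1::real), \<alpha>)) *\<^sub>R (1, \<alpha>)"

definition Kslice :: "real \<Rightarrow> (real \<times> real) set \<Rightarrow> real \<times> real \<Rightarrow> (real \<times> real) set" where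
  "Kslice \<alpha> K p =
     (if K \<inter> {p + t *\<^sub>R vdir \<alpha> | t. True} = {} then {}
      else closed_segment p
             (p + measure lebesgue {t::real. p + t *\<^sub>R vdir \<alpha> \<in> K} *\<^sub>R vdir \<alpha>))"

definition shake_set :: "real \<Rightarrow> (real \<times> real) set \<Rightarrow> (real \<times> real) set" where
  "shake_set \<alpha> K = (\<Union>p\<in>lineD. Kslice \<alpha> K p)"

end

theory Submission
  imports Defs
begin

text \<open>
  The lines of direction \<open>v\<^sub>\<alpha>\<close> through the points \<open>(u, -u)\<close> of \<open>D\<close> are the lines
  \<open>y = \<alpha> x + c\<close> with \<open>c = -(1 + \<alpha>) u\<close>, so it suffices to compare, line by line, the
  shaken slice of \<open>gr f\<close> with the part of \<open>gr (Sh\<^sub>\<alpha> f)\<close> on that line.  The line meets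
  \<open>|x|\<close> at \<open>x = -c / (1 + \<alpha>)\<close> and \<open>x = c / (1 - \<alpha>)\<close>.  Let \<open>m = F\<^sub>\<alpha>(x\<^sub>\<alpha>\<^sup>+)\<close> be the minimum
  of \<open>F\<^sub>\<alpha>\<close>.  For \<open>c \<le> m\<close> the slice of \<open>gr f\<close> is the whole chord between these points; for
  \<open>c > m\<close> it is the chord with the gap between the two solutions \<open>l < x\<^sub>\<alpha>\<^sup>+ < F\<^sub>\<alpha>\<^sup>-\<^sup>1(c)\<close>
  of \<open>F\<^sub>\<alpha> = c\<close> removed.  So the shaken slice starts at \<open>-c / (1 + \<alpha>)\<close> and ends at
  \<open>l + c / (1 - \<alpha>) - F\<^sub>\<alpha>\<^sup>-\<^sup>1(c) = l + \<delta>\<^sub>l\<close>.  On the other hand \<open>x \<mapsto> x + \<delta>\<^sub>x\<close> is increasing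
  and \<open>F\<^sub>\<alpha>\<close> is decreasing on \<open>(-\<infinity>, x\<^sub>\<alpha>\<^sup>+]\<close>, so the point \<open>(x, \<alpha> x + c)\<close> lies below
  \<open>Sh\<^sub>\<alpha> f\<close>, i.e. \<open>c \<le> F\<^sub>\<alpha>(\<tau> x)\<close>, exactly when \<open>\<tau> x \<le> l\<close>, i.e. when \<open>x \<le> l + \<delta>\<^sub>l\<close>.
\<close>

section \<open>Convexity, segments and length on the real line\<close>

lemma strictly_convex_onD:
  assumes "strictly_convex_on S g" "x \<in> S" "y \<in> S" "x \<noteq> y" "0 < t" "t < 1"
  shows "g (t * x + (1 - t) * y) < t * g x + (1 - t) * g y"
  using assms unfolding strictly_convex_on_def by blast

lemma strictly_convex_on_imp_convex_on:
  assumes "strictly_convex_on {l..u} g"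
  shows "convex_on {l..u} g"
proof (rule convex_on_linorderI)
  fix t x y :: real
  assume "0 < t" "t < 1" "x \<in> {l..u}" "y \<in> {l..u}" "x < y"
  then have "g ((1 - t) * x + (1 - (1 - t)) * y) < (1 - t) * g x + (1 - (1 - t)) * g y"
    by (intro strictly_convex_onD[OF assms]) auto
  then show "g ((1 - t) *\<^sub>R x + t *\<^sub>R y) \<le> (1 - t) * g x + t * g y"
    by simp
qed simp

lemma convex_on_Icc_above_tangent:
  fixes g :: "real \<Rightarrow> real"
  assumes convex: "convex_on {l..u} g" and x: "x \<in> {l..u}" and y: "y \<in> {l..u}"
    and deriv: "(g has_real_derivative d) (at x)"
  shows "g y - g x \<ge> d * (y - x)"
proof (cases y x rule: linorder_cases)
  case greater
  have "((\<lambda>z. (g z - g x) / (z - x)) \<longlongrightarrow> d) (at_right x)"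
    using deriv unfolding has_field_derivative_iff by (blast intro: tendsto_mono at_le)
  moreover have "eventually (\<lambda>z. (g z - g x) / (z - x) \<le> (g y - g x) / (y - x)) (at_right x)"
    using eventually_at_right_real[OF greater]
  proof eventually_elim
    fix z assume z: "z \<in> {x<..<y}"
    have "convex_on {x..y} g"
      using x y by (intro convex_on_subset[OF convex]) auto
    then have "g z \<le> (g y - g x) / (y - x) * (z - x) + g x"
      using z by (intro convex_onD_Icc') auto
    then show "(g z - g x) / (z - x) \<le> (g y - g x) / (y - x)"
      using z by (simp add: divide_simps algebra_simps)
  qed
  ultimately have "d \<le> (g y - g x) / (y - x)"
    by (rule tendsto_upperbound) simp
  then show ?thesis
    using greater by (simp add: field_simps)
next
  case less
  have "((\<lambda>z. (g z - g x) / (z - x)) \<longlongrightarrow> d) (at_left x)"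
    using deriv unfolding has_field_derivative_iff by (blast intro: tendsto_mono at_le)
  moreover have "eventually (\<lambda>z. (g z - g x) / (z - x) \<ge> (g y - g x) / (y - x)) (at_left x)"
    using eventually_at_left_real[OF less]
  proof eventually_elim
    fix z assume z: "z \<in> {y<..<x}"
    have "convex_on {y..x} g"
      using x y by (intro convex_on_subset[OF convex]) auto
    then have "g z \<le> (g y - g x) / (x - y) * (x - z) + g x"
      using z by (intro convex_onD_Icc'') auto
    then show "(g z - g x) / (z - x) \<ge> (g y - g x) / (y - x)"
      using z by (simp add: divide_simps) (simp add: algebra_simps)
  qed
  ultimately have "d \<ge> (g y - g x) / (y - x)"
    by (rule tendsto_lowerbound) simp
  then show ?thesis
    using less by (simp add: field_simps)
qed simp

lemma strictly_convex_on_above_tangent: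
  fixes g :: "real \<Rightarrow> real"
  assumes sconvex: "strictly_convex_on {l..u} g" and x: "x \<in> {l..u}" and y: "y \<in> {l..u}"
    and deriv: "(g has_real_derivative d) (at x)" and "x \<noteq> y"
  shows "g y - g x > d * (y - x)"
proof -
  define z where "z = (1/2) * x + (1 - 1/2) * y"
  have "z \<in> {l..u}"
    using x y unfolding z_def by auto
  then have "g z - g x \<ge> d * (z - x)"
    using convex_on_Icc_above_tangent[OF strictly_convex_on_imp_convex_on[OF sconvex] x _ deriv]
    by blast
  moreover have "g z < (1/2) * g x + (1 - 1/2) * g y"
    unfolding z_def by (intro strictly_convex_onD[OF sconvex x y \<open>x \<noteq> y\<close>]) auto
  ultimately show ?thesis
    unfolding z_def by (simp add: algebra_simps)
qed

lemma measure_lebesgue_scaled_preimage: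
  fixes N u :: real
  assumes "0 < N"
  shows "measure lebesgue {t. u + t / N \<in> S} = N * measure lebesgue S"
proof -
  have "{t. u + t / N \<in> S} = (\<lambda>x. N *\<^sub>R x + (- N * u)) ` S"
  proof (intro set_eqI iffI)
    fix t assume "t \<in> {t. u + t / N \<in> S}"
    then show "t \<in> (\<lambda>x. N *\<^sub>R x + (- N * u)) ` S"
      using assms by (intro image_eqI[of _ _ "u + t / N"]) (auto simp: algebra_simps)
  qed (use assms in \<open>auto simp: field_simps\<close>)
  then show ?thesis
    using measure_lebesgue_affine[of N "- N * u" S] assms by simp
qed

lemma measure_lebesgue_Icc_Un_Icc:
  fixes A B C D :: real
  assumes "A \<le> B" "B < C"
  shows "measure lebesgue ({A..B} \<union> {C..D}) = (B - A) + max 0 (D - C)"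
proof (cases "C \<le> D")
  case True
  have "measure lborel ({A..B} \<union> {C..D}) = measure lborel {A..B} + measure lborel {C..D}"
    using assms by (intro measure_Union) (auto simp: emeasure_lborel_Icc_eq)
  then show ?thesis
    using assms True by (simp add: measure_completion)
next
  case False
  then show ?thesis
    using assms by (simp add: measure_completion)
qed

lemma abs_le_affine_iff:
  fixes x c \<alpha> :: real
  assumes "0 \<le> \<alpha>" "\<alpha> < 1"
  shows "\<bar>x\<bar> \<le> \<alpha> * x + c \<longleftrightarrow> -c / (1 + \<alpha>) \<le> x \<and> x \<le> c / (1 - \<alpha>)"
proof -
  have "-c / (1 + \<alpha>) \<le> x \<longleftrightarrow> -c \<le> (1 + \<alpha>) * x"
    using assms pos_divide_le_eq[of "1 + \<alpha>" "-c" x] by (simp add: mult.commute)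
  moreover have "x \<le> c / (1 - \<alpha>) \<longleftrightarrow> (1 - \<alpha>) * x \<le> c"
    using assms by (simp add: pos_le_divide_eq mult.commute)
  ultimately show ?thesis
    by (auto simp: abs_le_iff algebra_simps)
qed

lemma abs_less_affine_iff:
  fixes x c \<alpha> :: real
  assumes "0 \<le> \<alpha>" "\<alpha> < 1"
  shows "\<bar>x\<bar> < \<alpha> * x + c \<longleftrightarrow> -c / (1 + \<alpha>) < x \<and> x < c / (1 - \<alpha>)"
proof -
  have "-c / (1 + \<alpha>) < x \<longleftrightarrow> -c < (1 + \<alpha>) * x"
    using assms pos_divide_less_eq[of "1 + \<alpha>" "-c" x] by (simp add: mult.commute)
  moreover have "x < c / (1 - \<alpha>) \<longleftrightarrow> (1 - \<alpha>) * x < c"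
    using assms by (simp add: pos_less_divide_eq mult.commute)
  ultimately show ?thesis
    by (auto simp: abs_less_iff algebra_simps)
qed

lemma mem_closed_segment_slope_iff:
  fixes u v x y \<alpha> L :: real
  assumes "0 \<le> L"
  shows "(x, y) \<in> closed_segment (u, v) (u + L, v + \<alpha> * L) \<longleftrightarrow>
    y = v + \<alpha> * (x - u) \<and> u \<le> x \<and> x \<le> u + L"
proof
  assume "(x, y) \<in> closed_segment (u, v) (u + L, v + \<alpha> * L)"
  then obtain \<theta> where "0 \<le> \<theta>" "\<theta> \<le> 1" "x = u + \<theta> * L" "y = v + \<alpha> * (\<theta> * L)"
    by (auto simp: in_segment algebra_simps)
  moreover have "\<theta> * L \<le> L"
    using \<open>0 \<le> \<theta>\<close> \<open>\<theta> \<le> 1\<close> assms by (simp add: mult_left_le_one_le)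
  ultimately show "y = v + \<alpha> * (x - u) \<and> u \<le> x \<and> x \<le> u + L"
    using assms by simp
next
  assume xy: "y = v + \<alpha> * (x - u) \<and> u \<le> x \<and> x \<le> u + L"
  define \<theta> where "\<theta> = (if L = 0 then 0 else (x - u) / L)"
  have "\<theta> * L = x - u"
    using xy unfolding \<theta>_def by auto
  moreover have "0 \<le> \<theta>" "\<theta> \<le> 1"
    using xy assms unfolding \<theta>_def by auto
  ultimately show "(x, y) \<in> closed_segment (u, v) (u + L, v + \<alpha> * L)"
    using xy unfolding in_segment
    by (intro conjI exI[of _ \<theta>]) (auto simp: algebra_simps)
qed

text \<open>Measuring the line by the \<open>x\<close>-coordinate rather than by arc length scales lengths by
  \<open>|(1, \<alpha>)|\<close>, which cancels against the normalisation of \<open>v\<^sub>\<alpha>\<close>.\<close>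
lemma Kslice_eq_segment:
  fixes K :: "(real \<times> real) set" and \<alpha> u :: real
  defines "S \<equiv> {x. (x, \<alpha> * x - (1 + \<alpha>) * u) \<in> K}"
  shows "Kslice \<alpha> K (u, - u) =
    (if S = {} then {}
     else closed_segment (u, - u) (u + measure lebesgue S, - u + \<alpha> * measure lebesgue S))"
proof -
  define N where "N = norm (1::real, \<alpha>)"
  have "0 < N"
    unfolding N_def by (simp add: zero_prod_def)
  have line: "(u, - u) + t *\<^sub>R vdir \<alpha> \<in> K \<longleftrightarrow> u + t / N \<in> S" for t
    unfolding S_def N_def vdir_def by (simp add: algebra_simps)
  have "K \<inter> {(u, - u) + t *\<^sub>R vdir \<alpha> | t. True} = {} \<longleftrightarrow> S = {}"
  proof
    assume "S = {}"
    then show "K \<inter> {(u, - u) + t *\<^sub>R vdir \<alpha> | t. True} = {}"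
      using line by blast
  next
    assume empty: "K \<inter> {(u, - u) + t *\<^sub>R vdir \<alpha> | t. True} = {}"
    show "S = {}"
    proof (intro equals0I)
      fix x assume "x \<in> S"
      then have "(u, - u) + (N * (x - u)) *\<^sub>R vdir \<alpha> \<in> K"
        using line \<open>0 < N\<close> by simp
      then show False
        using empty by blast
    qed
  qed
  moreover have "measure lebesgue {t. (u, - u) + t *\<^sub>R vdir \<alpha> \<in> K} = N * measure lebesgue S"
    unfolding line by (rule measure_lebesgue_scaled_preimage[OF \<open>0 < N\<close>])
  moreover have "(u, - u) + (N * L) *\<^sub>R vdir \<alpha> = (u + L, - u + \<alpha> * L)" for L
    using \<open>0 < N\<close> unfolding N_def vdir_def by simp
  ultimately show ?thesis
    unfolding Kslice_def by simp
qed

lemma a_of_b_of_eq: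
  assumes "{x. g x \<noteq> \<bar>x\<bar>} = {l<..<u}" "l < u"
  shows "a_of g = l" "b_of g = u"
  using assms by (simp_all add: a_of_def b_of_def)

section \<open>The profile \<open>f\<close> and the function \<open>F\<^sub>\<alpha>\<close>\<close>

locale classC_shaking =
  fixes a \<alpha> :: real and f :: "real \<Rightarrow> real"
  assumes a_pos: "0 < a" and alpha_nonneg: "0 \<le> \<alpha>" and alpha_less_1: "\<alpha> < 1"
    and classC: "classC a f"
begin

lemma alpha_factors_pos: "0 < 1 - \<alpha>" "0 < 1 + \<alpha>"
  using alpha_nonneg alpha_less_1 by simp_all

lemma minus_one_plus_alpha_mult: "- (1 + \<alpha>) * (- c / (1 + \<alpha>)) = c"
proof -
  have "1 + \<alpha> \<noteq> 0"
    using alpha_factors_pos by simp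
  then show ?thesis
    by (simp add: field_simps)
qed

lemma f_minus: "f (- x) = f x"
  using classC by (simp add: classC_def)

lemma f_eq_abs: "a \<le> \<bar>x\<bar> \<Longrightarrow> f x = \<bar>x\<bar>"
  using classC by (simp add: classC_def)

lemma f_strictly_convex: "strictly_convex_on {-a..a} f"
  using classC by (simp add: classC_def)

lemma f_has_continuous_deriv:
  "\<exists>D. (\<forall>x. (f has_real_derivative D x) (at x)) \<and> continuous_on UNIV D"
  using classC unfolding classC_def C1_differentiable_on_def
  by (auto simp: has_real_derivative_iff_has_vector_derivative)

lemma f_has_deriv: "(f has_real_derivative deriv f x) (at x)"
  using f_has_continuous_deriv by (metis DERIV_imp_deriv)

lemma continuous_on_deriv_f: "continuous_on UNIV (deriv f)"
proof -
  obtain D where "\<forall>x. (f has_real_derivative D x) (at x)" "continuous_on UNIV D"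
    using f_has_continuous_deriv by blast
  moreover from this(1) have "deriv f = D"
    by (auto intro!: ext DERIV_imp_deriv)
  ultimately show ?thesis
    by simp
qed

lemma continuous_on_f: "continuous_on S f"
  using f_has_deriv by (meson DERIV_continuous continuous_at_imp_continuous_on)

lemma deriv_f_eq_1:
  assumes "a \<le> x"
  shows "deriv f x = 1"
proof -
  \<comment> \<open>one-sided, since at \<open>x = a\<close> the function \<open>f\<close> agrees with the identity only to the right\<close>
  have "(f has_real_derivative 1) (at x within cbox x (x + 1))"
  proof (rule has_field_derivative_transform_within[OF _ zero_less_one])
    show "((\<lambda>y. y) has_real_derivative 1) (at x within cbox x (x + 1))"
      by (rule DERIV_ident)
    show "\<And>y. y \<in> cbox x (x + 1) \<Longrightarrow> dist y x < 1 \<Longrightarrow> y = f y"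
      using assms a_pos by (simp add: f_eq_abs)
  qed simp
  moreover have "(f has_real_derivative deriv f x) (at x within cbox x (x + 1))"
    using f_has_deriv by (rule has_field_derivative_at_within)
  ultimately show ?thesis
    unfolding has_real_derivative_iff_has_vector_derivative
    by (intro vector_derivative_unique_within_closed_interval[of x "x + 1" x]) auto
qed

lemma deriv_f_minus: "deriv f (- x) = - deriv f x"
proof -
  have "((\<lambda>y. f (- y)) has_real_derivative - deriv f (- x)) (at x)"
    using DERIV_chain2[OF f_has_deriv DERIV_minus[OF DERIV_ident]] by simp
  then have "(f has_real_derivative - deriv f (- x)) (at x)"
    by (simp add: f_minus)
  then show ?thesis
    using f_has_deriv DERIV_unique by fastforce
qed

lemma deriv_f_eq_minus_1: "x \<le> -a \<Longrightarrow> deriv f x = -1"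
  using deriv_f_eq_1[of "- x"] deriv_f_minus[of x] by simp

lemma f_above_tangent:
  "x \<in> {-a..a} \<Longrightarrow> y \<in> {-a..a} \<Longrightarrow> x \<noteq> y \<Longrightarrow> f y - f x > deriv f x * (y - x)"
  by (rule strictly_convex_on_above_tangent[OF f_strictly_convex _ _ f_has_deriv])

lemma deriv_f_strict_mono:
  assumes "x \<in> {-a..a}" "y \<in> {-a..a}" "x < y"
  shows "deriv f x < deriv f y"
proof -
  have "(deriv f x - deriv f y) * (y - x) < 0"
    using f_above_tangent[of x y] f_above_tangent[of y x] assms by (simp add: algebra_simps)
  then show ?thesis
    using assms by (simp add: mult_less_0_iff)
qed

lemma f_gt_abs:
  assumes "\<bar>x\<bar> < a"
  shows "\<bar>x\<bar> < f x"
proof -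
  have "x \<in> {-a..a}" "x \<noteq> a" "x \<noteq> -a"
    using assms by auto
  then have "f x - f a > x - a" "f x - f (-a) > - (x + a)"
    using f_above_tangent[of a x] f_above_tangent[of "-a" x] a_pos
      deriv_f_eq_1[of a] deriv_f_eq_minus_1[of "-a"] by auto
  moreover have "f a = a" "f (-a) = a"
    using f_eq_abs[of a] f_eq_abs[of "-a"] a_pos by auto
  ultimately show ?thesis
    by (simp add: abs_if)
qed

lemma f_ge_abs: "\<bar>x\<bar> \<le> f x"
  using f_gt_abs[of x] f_eq_abs[of x] by (cases "\<bar>x\<bar> < a") auto

lemma f_neq_abs_iff: "f x \<noteq> \<bar>x\<bar> \<longleftrightarrow> -a < x \<and> x < a"
  using f_gt_abs[of x] f_eq_abs[of x] by (cases "\<bar>x\<bar> < a") auto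

lemma deriv_f_le_1: "deriv f x \<le> 1"
proof -
  consider "x \<le> -a" | "x \<in> {-a..a}" "x < a" | "a \<le> x"
    by fastforce
  then show ?thesis
    using deriv_f_strict_mono[of x a] deriv_f_eq_1 deriv_f_eq_minus_1 a_pos
    by cases fastforce+
qed

abbreviation "F \<equiv> shF \<alpha> f"
abbreviation "xp \<equiv> xplus a \<alpha> f"

lemma F_has_deriv: "(F has_real_derivative deriv f x - \<alpha>) (at x)"
  unfolding shF_def[abs_def] by (auto intro!: derivative_eq_intros f_has_deriv)

lemma continuous_on_F: "continuous_on S F"
  unfolding shF_def[abs_def] by (auto intro!: continuous_intros continuous_on_f)

lemma F_eq_right: "a \<le> x \<Longrightarrow> F x = (1 - \<alpha>) * x"
  using f_eq_abs[of x] a_pos by (simp add: shF_def algebra_simps)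

lemma F_eq_left: "x \<le> -a \<Longrightarrow> F x = - (1 + \<alpha>) * x"
  using f_eq_abs[of x] a_pos by (simp add: shF_def algebra_simps)

lemma F_ge_lines: "(1 - \<alpha>) * x \<le> F x" "- (1 + \<alpha>) * x \<le> F x"
  using f_ge_abs[of x] by (simp_all add: shF_def algebra_simps)

lemma F_gt_lines: "\<bar>x\<bar> < a \<Longrightarrow> (1 - \<alpha>) * x < F x \<and> - (1 + \<alpha>) * x < F x"
  using f_gt_abs[of x] by (simp add: shF_def algebra_simps abs_less_iff)

lemma xplus_spec: "xp \<in> {-a..a} \<and> deriv f xp = \<alpha>"
proof -
  have "continuous_on {-a..a} (deriv f)"
    using continuous_on_deriv_f by (rule continuous_on_subset) simp
  then obtain x where "x \<in> {-a..a}" "deriv f x = \<alpha>"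
    using IVT'[of "deriv f" "-a" \<alpha> a] deriv_f_eq_1[of a] deriv_f_eq_minus_1[of "-a"]
      alpha_nonneg alpha_less_1 a_pos
    by auto
  moreover have "y = x" if "y \<in> {-a..a}" "deriv f y = \<alpha>" for y
    using deriv_f_strict_mono[of x y] deriv_f_strict_mono[of y x] that \<open>x \<in> {-a..a}\<close>
      \<open>deriv f x = \<alpha>\<close> by (cases x y rule: linorder_cases) auto
  ultimately have "\<exists>!x. x \<in> {-a..a} \<and> deriv f x = \<alpha>"
    by blast
  then show ?thesis
    unfolding xplus_def by (rule theI')
qed

lemma xplus_bounds: "-a < xp" "xp < a"
  using xplus_spec deriv_f_eq_1[of a] deriv_f_eq_minus_1[of "-a"] alpha_nonneg alpha_less_1
  by (auto simp: less_le)

lemma deriv_F_neg: "x < xp \<Longrightarrow> deriv f x - \<alpha> < 0"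
  using deriv_f_strict_mono[of x xp] deriv_f_eq_minus_1[of x] xplus_spec alpha_nonneg
  by (cases "x < -a") auto

lemma deriv_F_pos: "xp < x \<Longrightarrow> 0 < deriv f x - \<alpha>"
  using deriv_f_strict_mono[of xp x] deriv_f_eq_1[of x] xplus_spec alpha_less_1
  by (cases "a < x") auto

lemma F_strict_antimono:
  assumes "x < y" "y \<le> xp"
  shows "F y < F x"
proof (rule DERIV_neg_imp_decreasing_open[OF assms(1) _ continuous_on_F])
  fix z assume "x < z" "z < y"
  then show "\<exists>d. (F has_real_derivative d) (at z) \<and> d < 0"
    using F_has_deriv[of z] deriv_F_neg[of z] assms by auto
qed

lemma F_strict_mono:
  assumes "xp \<le> x" "x < y"
  shows "F x < F y"
proof (rule DERIV_pos_imp_increasing_open[OF assms(2) _ continuous_on_F])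
  fix z assume "x < z" "z < y"
  then show "\<exists>d. (F has_real_derivative d) (at z) \<and> d > 0"
    using F_has_deriv[of z] deriv_F_pos[of z] assms by auto
qed

lemma F_le_iff_left: "x \<le> xp \<Longrightarrow> y \<le> xp \<Longrightarrow> F x \<le> F y \<longleftrightarrow> y \<le> x"
  using F_strict_antimono[of x y] F_strict_antimono[of y x] by (cases x y rule: linorder_cases) auto

lemma F_le_iff_right: "xp \<le> x \<Longrightarrow> xp \<le> y \<Longrightarrow> F x \<le> F y \<longleftrightarrow> x \<le> y"
  using F_strict_mono[of x y] F_strict_mono[of y x] by (cases x y rule: linorder_cases) auto

lemma F_xplus_le: "F xp \<le> F x"
  using F_strict_antimono[of x xp] F_strict_mono[of xp x] by (cases x xp rule: linorder_cases) auto

lemma xplus_nonneg: "0 \<le> xp"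
proof (rule ccontr)
  assume "\<not> 0 \<le> xp"
  then have "F xp < F (- xp)"
    using F_strict_mono[of xp "- xp"] by simp
  moreover have "F (- xp) \<le> F xp"
    using \<open>\<not> 0 \<le> xp\<close> alpha_nonneg f_minus[of xp] by (simp add: shF_def mult_nonneg_nonpos)
  ultimately show False
    by simp
qed

lemma F_xplus_gt: "(1 - \<alpha>) * xp < F xp"
  using F_gt_lines[of xp] xplus_bounds xplus_nonneg by simp

lemma F_xplus_pos: "0 < F xp"
  using F_xplus_gt mult_nonneg_nonneg[OF less_imp_le[OF alpha_factors_pos(1)] xplus_nonneg]
  by linarith

lemma F_diff_le: "x \<le> y \<Longrightarrow> F y - F x \<le> (1 - \<alpha>) * (y - x)"
proof -
  assume "x \<le> y"
  then have "f y - y \<le> f x - x"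
    using deriv_f_le_1
    by (intro DERIV_nonpos_imp_nonincreasing[where f = "\<lambda>z. f z - z"])
       (auto intro!: derivative_eq_intros f_has_deriv)
  then show ?thesis
    by (simp add: shF_def algebra_simps)
qed

lemma left_crossing_less:
  assumes "-a < z" "z \<le> xp"
  shows "- F z / (1 + \<alpha>) < z"
proof (cases "- F z / (1 + \<alpha>) \<le> -a")
  case False
  define lo where "lo = - F z / (1 + \<alpha>)"
  have "0 < F z"
    using F_xplus_le[of z] F_xplus_pos by linarith
  then have "lo \<le> 0"
    using alpha_factors_pos unfolding lo_def by simp
  moreover have "-a < lo"
    using False unfolding lo_def by simp
  ultimately have "\<bar>lo\<bar> < a"
    by (simp add: abs_if)
  then have "F z < F lo"
    using F_gt_lines[of lo] minus_one_plus_alpha_mult[of "F z"] unfolding lo_def by simp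
  then show ?thesis
    using F_le_iff_left[of lo z] \<open>lo \<le> 0\<close> xplus_nonneg assms(2) unfolding lo_def by linarith
qed (use assms(1) in simp)

lemma F_image_right: "F ` {xp..} = {F xp..}"
proof (intro equalityI subsetI)
  fix c assume c: "c \<in> {F xp..}"
  have "c \<le> F (c / (1 - \<alpha>))"
    using F_ge_lines(1)[of "c / (1 - \<alpha>)"] alpha_less_1 by simp
  moreover have "xp \<le> c / (1 - \<alpha>)"
    using F_xplus_gt c alpha_less_1 by (simp add: pos_le_divide_eq algebra_simps)
  ultimately obtain z where "xp \<le> z" "F z = c"
    using IVT'[of F xp c "c / (1 - \<alpha>)"] c continuous_on_F by auto
  then show "c \<in> F ` {xp..}"
    by auto
qed (use F_xplus_le in auto)

lemma F_image_left: "F ` {..xp} = {F xp..}"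
proof (intro equalityI subsetI)
  fix c assume c: "c \<in> {F xp..}"
  have "c \<le> F (- c / (1 + \<alpha>))"
    using F_ge_lines(2)[of "- c / (1 + \<alpha>)"] unfolding minus_one_plus_alpha_mult .
  moreover have "- c / (1 + \<alpha>) \<le> xp"
  proof -
    have "0 \<le> c / (1 + \<alpha>)"
      using F_xplus_pos c alpha_factors_pos by simp
    then show ?thesis
      using xplus_nonneg by simp
  qed
  ultimately obtain z where "z \<le> xp" "F z = c"
    using IVT2'[of F xp c "- c / (1 + \<alpha>)"] c continuous_on_F by auto
  then show "c \<in> F ` {..xp}"
    by auto
qed (use F_xplus_le in auto)

lemma inj_on_F_right: "inj_on F {xp..}"
proof (rule inj_onI)
  fix x y assume "x \<in> {xp..}" "y \<in> {xp..}" "F x = F y"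
  then show "x = y"
    using F_le_iff_right[of x y] F_le_iff_right[of y x] by auto
qed

lemma inj_on_F_left: "inj_on F {..xp}"
proof (rule inj_onI)
  fix x y assume "x \<in> {..xp}" "y \<in> {..xp}" "F x = F y"
  then show "x = y"
    using F_le_iff_left[of x y] F_le_iff_left[of y x] by auto
qed

abbreviation "Finv \<equiv> shFinv a \<alpha> f"
abbreviation "Finv_left \<equiv> the_inv_into {..xp} F"

lemma Finv_eq_the_inv_into: "Finv = the_inv_into {xp..} F"
  by (simp add: fun_eq_iff shFinv_def the_inv_into_def)

lemma Finv_spec:
  assumes "F xp \<le> c"
  shows "xp \<le> Finv c \<and> F (Finv c) = c"
proof -
  have "c \<in> F ` {xp..}"
    using F_image_right assms by simp
  then show ?thesis
    unfolding Finv_eq_the_inv_into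
    using the_inv_into_into[OF inj_on_F_right, of c "{xp..}"] f_the_inv_into_f[OF inj_on_F_right]
    by simp
qed

lemma Finv_F: "xp \<le> z \<Longrightarrow> Finv (F z) = z"
  unfolding Finv_eq_the_inv_into using inj_on_F_right by (simp add: the_inv_into_f_f)

lemma Finv_left_spec:
  assumes "F xp \<le> c"
  shows "Finv_left c \<le> xp \<and> F (Finv_left c) = c"
proof -
  have "c \<in> F ` {..xp}"
    using F_image_left assms by simp
  then show ?thesis
    using the_inv_into_into[OF inj_on_F_left, of c "{..xp}"] f_the_inv_into_f[OF inj_on_F_left]
    by simp
qed

lemma Finv_le:
  assumes "F xp \<le> c"
  shows "Finv c \<le> c / (1 - \<alpha>)"
proof -
  have "c \<le> F (c / (1 - \<alpha>))"
    using F_ge_lines(1)[of "c / (1 - \<alpha>)"] alpha_less_1 by simp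
  moreover have "xp \<le> c / (1 - \<alpha>)"
    using F_xplus_gt assms alpha_less_1 by (simp add: pos_le_divide_eq algebra_simps)
  ultimately show ?thesis
    using F_le_iff_right[of "Finv c" "c / (1 - \<alpha>)"] Finv_spec[OF assms] by simp
qed

lemma Finv_eq_right:
  assumes "(1 - \<alpha>) * a \<le> c"
  shows "Finv c = c / (1 - \<alpha>)"
proof -
  have "a \<le> c / (1 - \<alpha>)"
    using assms alpha_less_1 by (simp add: pos_le_divide_eq mult.commute)
  then show ?thesis
    using Finv_F[of "c / (1 - \<alpha>)"] F_eq_right[of "c / (1 - \<alpha>)"] xplus_bounds alpha_less_1
    by simp
qed

lemma continuous_on_Finv:
  assumes "xp \<le> B"
  shows "continuous_on {F xp..F B} Finv"
proof -
  have "F ` {xp..B} = {F xp..F B}"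
  proof (intro equalityI subsetI)
    fix c assume "c \<in> {F xp..F B}"
    then obtain z where "xp \<le> z" "z \<le> B" "F z = c"
      using IVT'[of F xp c B] assms continuous_on_F by auto
    then show "c \<in> F ` {xp..B}"
      by auto
  qed (auto simp: F_le_iff_right)
  moreover have "continuous_on (F ` {xp..B}) Finv"
    by (rule continuous_on_inv) (auto simp: continuous_on_F Finv_F)
  ultimately show ?thesis
    by simp
qed

section \<open>The shaken function\<close>

abbreviation "h \<equiv> \<lambda>x. x + shDelta a \<alpha> f x"
abbreviation "s \<equiv> shS a \<alpha> f"
abbreviation "tau \<equiv> shTau a \<alpha> f"
abbreviation "g \<equiv> shake_fun a \<alpha> f"

lemma h_eq: "h x = x + F x / (1 - \<alpha>) - Finv (F x)"
  by (simp add: shDelta_def shPhi_def)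

lemma h_eq_left:
  assumes "x \<le> -a"
  shows "h x = x"
proof -
  have "(1 - \<alpha>) * a \<le> (1 + \<alpha>) * (- x)"
    using assms alpha_nonneg a_pos by (intro mult_mono) auto
  then have "(1 - \<alpha>) * a \<le> F x"
    using F_eq_left[OF assms] by (simp add: algebra_simps)
  then show ?thesis
    using h_eq[of x] Finv_eq_right[of "F x"] by simp
qed

lemma s_eq: "s = F xp / (1 - \<alpha>)"
  using h_eq[of xp] Finv_F[of xp] by (simp add: shS_def)

lemma s_pos: "0 < s"
  using s_eq F_xplus_pos alpha_less_1 by simp

lemma h_xplus: "h xp = s"
  by (simp add: shS_def)

text \<open>Since \<open>F\<close> has slope at most \<open>1 - \<alpha>\<close> (\<open>F_diff_le\<close>), its right inverse has slope at least
  \<open>1 / (1 - \<alpha>)\<close>, which more than compensates the term \<open>F x / (1 - \<alpha>)\<close> in \<open>h\<close>.\<close>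
lemma h_diff_ge:
  assumes "x < y" "y \<le> xp"
  shows "y - x \<le> h y - h x"
proof -
  have "F y < F x" "F xp \<le> F y"
    using F_strict_antimono[OF assms] F_xplus_le by auto
  then have "Finv (F y) \<le> Finv (F x)"
    using F_le_iff_right[of "Finv (F y)" "Finv (F x)"] Finv_spec[of "F x"] Finv_spec[of "F y"] by auto
  then have "F x - F y \<le> (1 - \<alpha>) * (Finv (F x) - Finv (F y))"
    using F_diff_le[of "Finv (F y)" "Finv (F x)"] Finv_spec[of "F x"] Finv_spec[of "F y"] \<open>F xp \<le> F y\<close>
      \<open>F y < F x\<close> by simp
  then have "(F x - F y) / (1 - \<alpha>) \<le> Finv (F x) - Finv (F y)"
    using alpha_less_1 by (simp add: pos_divide_le_eq mult.commute)
  then show ?thesis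
    unfolding h_eq using alpha_less_1 by (simp add: diff_divide_distrib)
qed

lemma h_le_iff: "x \<le> xp \<Longrightarrow> y \<le> xp \<Longrightarrow> h x \<le> h y \<longleftrightarrow> x \<le> y"
  using h_diff_ge[of x y] h_diff_ge[of y x] by (cases x y rule: linorder_cases) auto

lemma continuous_on_h:
  assumes "z \<le> xp"
  shows "continuous_on {z..xp} h"
proof -
  define B where "B = max xp (F z / (1 - \<alpha>))"
  have "xp \<le> B"
    unfolding B_def by simp
  have "F z \<le> (1 - \<alpha>) * B"
    using alpha_less_1 mult_left_mono[of "F z / (1 - \<alpha>)" B "1 - \<alpha>"] unfolding B_def by simp
  then have "F z \<le> F B"
    using F_ge_lines(1)[of B] by simp
  then have "F ` {z..xp} \<subseteq> {F xp..F B}"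
    using F_le_iff_left[of _ z] F_xplus_le assms by fastforce
  then have "continuous_on {z..xp} (\<lambda>x. Finv (F x))"
    by (rule continuous_on_compose2[OF continuous_on_Finv[OF \<open>xp \<le> B\<close>] continuous_on_F])
  then have "continuous_on {z..xp} (\<lambda>x. x + F x / (1 - \<alpha>) - Finv (F x))"
    using alpha_less_1 by (auto intro!: continuous_intros continuous_on_F)
  then show ?thesis
    unfolding h_eq .
qed

lemma h_image: "h ` {..xp} = {..s}"
proof (intro equalityI subsetI)
  fix y assume "y \<in> {..s}"
  define z where "z = min y (-a)"
  have "z \<le> xp" "h z \<le> y"
    using h_eq_left[of z] xplus_bounds unfolding z_def by auto
  then obtain x where "z \<le> x" "x \<le> xp" "h x = y"
    using IVT'[of h z y xp] continuous_on_h[of z] h_xplus \<open>y \<in> {..s}\<close> by auto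
  then show "y \<in> h ` {..xp}"
    by auto
qed (use h_le_iff[of _ xp] h_xplus in auto)

lemma inj_on_h: "inj_on h {..xp}"
proof (rule inj_onI)
  fix x y assume "x \<in> {..xp}" "y \<in> {..xp}" "h x = h y"
  then show "x = y"
    using h_le_iff[of x y] h_le_iff[of y x] by auto
qed

lemma tau_eq_the_inv_into: "tau = the_inv_into {..xp} h"
  by (simp add: fun_eq_iff shTau_def the_inv_into_def)

lemma tau_spec:
  assumes "y \<le> s"
  shows "tau y \<le> xp \<and> h (tau y) = y"
proof -
  have "y \<in> h ` {..xp}"
    using h_image assms by simp
  then show ?thesis
    unfolding tau_eq_the_inv_into
    using the_inv_into_into[OF inj_on_h, of y "{..xp}"] f_the_inv_into_f[OF inj_on_h]
    by simp
qed

lemma tau_h: "x \<le> xp \<Longrightarrow> tau (h x) = x"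
  unfolding tau_eq_the_inv_into using the_inv_into_f_f[OF inj_on_h, of x] by simp

lemma g_eq: "x \<le> s \<Longrightarrow> g x = \<alpha> * x + F (tau x)"
  by (simp add: shake_fun_def)

lemma g_eq_abs_left:
  assumes "x \<le> -a"
  shows "g x = \<bar>x\<bar>"
proof -
  have "tau x = x"
    using tau_h[of x] h_eq_left[OF assms] assms xplus_bounds by simp
  then show ?thesis
    using g_eq[of x] F_eq_left[OF assms] assms a_pos s_pos by (simp add: algebra_simps)
qed

lemma g_eq_abs_right:
  assumes "s \<le> x"
  shows "g x = \<bar>x\<bar>"
proof (cases "x = s")
  case True
  have "tau s = xp"
    using tau_h[of xp] h_xplus by simp
  then have "g s = \<alpha> * s + F xp"
    using g_eq[of s] by simp
  also have "F xp = (1 - \<alpha>) * s"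
    using s_eq alpha_factors_pos by simp
  finally show ?thesis
    using True s_pos by (simp add: algebra_simps)
next
  case False
  then show ?thesis
    using assms s_pos by (simp add: shake_fun_def)
qed

lemma g_gt_abs:
  assumes "-a < x" "x < s"
  shows "\<bar>x\<bar> < g x"
proof -
  define z c where "z = tau x" and "c = F z"
  have z: "z \<le> xp" "h z = x"
    using tau_spec[of x] assms unfolding z_def by auto
  have "-a < z"
    using h_eq_left[of z] z assms by force
  have "z < xp"
    using z h_xplus assms by (cases "z = xp") auto
  then have "F xp < c"
    using F_strict_antimono unfolding c_def by simp
  then have Finv_c: "xp \<le> Finv c" "Finv c \<le> c / (1 - \<alpha>)"
    using Finv_spec[of c] Finv_le[of c] by auto
  have x_eq: "x = z + c / (1 - \<alpha>) - Finv c"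
    using z h_eq[of z] unfolding c_def by simp
  have "- c / (1 + \<alpha>) < z"
    using left_crossing_less[OF \<open>-a < z\<close> z(1)] unfolding c_def .
  then have "\<bar>x\<bar> < \<alpha> * x + c"
    using abs_less_affine_iff[OF alpha_nonneg alpha_less_1] x_eq Finv_c \<open>z < xp\<close> by simp
  then show ?thesis
    using g_eq[of x] assms unfolding z_def c_def by simp
qed

lemma g_neq_abs_iff: "g x \<noteq> \<bar>x\<bar> \<longleftrightarrow> -a < x \<and> x < s"
  using g_eq_abs_left[of x] g_eq_abs_right[of x] g_gt_abs[of x] by fastforce

lemma g_minus_line_ge: "F xp \<le> g x - \<alpha> * x"
proof (cases "x \<le> s")
  case False
  then have "F xp / (1 - \<alpha>) < x"
    using s_eq by simp
  then have "F xp < x * (1 - \<alpha>)"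
    using alpha_less_1 by (simp add: pos_divide_less_eq)
  then show ?thesis
    using False by (simp add: shake_fun_def algebra_simps)
qed (simp add: g_eq F_xplus_le)

section \<open>Slices of the graphs\<close>

lemma a_of_b_of_f: "a_of f = -a" "b_of f = a"
proof -
  have "{x. f x \<noteq> \<bar>x\<bar>} = {-a<..<a}"
    by (intro set_eqI) (simp add: f_neq_abs_iff)
  then show "a_of f = -a" "b_of f = a"
    using a_of_b_of_eq[of f "-a" a] a_pos by simp_all
qed

lemma a_of_b_of_g: "a_of g = -a" "b_of g = s"
proof -
  have "{x. g x \<noteq> \<bar>x\<bar>} = {-a<..<s}"
    by (intro set_eqI) (simp add: g_neq_abs_iff)
  then show "a_of g = -a" "b_of g = s"
    using a_of_b_of_eq[of g "-a" s] a_pos s_pos by simp_all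
qed

lemma left_crossing_ge_iff: "-a \<le> - c / (1 + \<alpha>) \<longleftrightarrow> c \<le> (1 + \<alpha>) * a"
  using pos_divide_le_eq[OF alpha_factors_pos(2), of c a] by (simp add: mult.commute)

lemma right_crossing_le_iff: "c / (1 - \<alpha>) \<le> a \<longleftrightarrow> c \<le> (1 - \<alpha>) * a"
  using pos_divide_le_eq[OF alpha_factors_pos(1), of c a] by (simp add: mult.commute)

lemma crossings_sign: "0 \<le> c \<Longrightarrow> - c / (1 + \<alpha>) \<le> 0 \<and> 0 \<le> c / (1 - \<alpha>)"
  using alpha_factors_pos by simp

lemma crossings_ordered_imp_nonneg:
  assumes "- c / (1 + \<alpha>) \<le> c / (1 - \<alpha>)"
  shows "0 \<le> c"
proof (rule ccontr)
  assume "\<not> 0 \<le> c"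
  then have "c / (1 - \<alpha>) < 0" "0 < - c / (1 + \<alpha>)"
    using alpha_factors_pos by (simp_all add: divide_neg_pos)
  then show False
    using assms by linarith
qed

lemma Finv_right_piece_length:
  assumes "F xp \<le> c"
  shows "max 0 (min (c / (1 - \<alpha>)) a - Finv c) = c / (1 - \<alpha>) - Finv c"
proof (cases "c / (1 - \<alpha>) \<le> a")
  case True
  then show ?thesis
    using Finv_le[OF assms] by simp
next
  case False
  then have "(1 - \<alpha>) * a \<le> c"
    using right_crossing_le_iff by simp
  then show ?thesis
    using Finv_eq_right[of c] False by simp
qed

definition slice :: "real \<Rightarrow> real set" where
  "slice c = {x. (x, \<alpha> * x + c) \<in> gr f}"

lemma mem_slice_iff:
  "x \<in> slice c \<longleftrightarrow> -a \<le> x \<and> x \<le> a \<and> - c / (1 + \<alpha>) \<le> x \<and> x \<le> c / (1 - \<alpha>) \<and> c \<le> F x"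
proof -
  have "x \<in> slice c \<longleftrightarrow>
      -a \<le> x \<and> x \<le> a \<and> \<bar>x\<bar> \<le> \<alpha> * x + c \<and> \<alpha> * x + c \<le> f x"
    unfolding slice_def gr_def a_of_b_of_f by auto
  also have "\<alpha> * x + c \<le> f x \<longleftrightarrow> c \<le> F x"
    by (simp add: shF_def algebra_simps)
  also note abs_le_affine_iff[OF alpha_nonneg alpha_less_1]
  finally show ?thesis
    by simp
qed

lemma mem_gr_g_iff:
  "(x, y) \<in> gr g \<longleftrightarrow> -a \<le> x \<and> x \<le> s \<and> \<bar>x\<bar> \<le> y \<and> y \<le> g x"
  unfolding gr_def a_of_b_of_g by auto

lemma F_le_on_support:
  assumes "x \<in> {-a..a}"
  shows "F x \<le> (1 + \<alpha>) * a"
proof (cases "x \<le> xp")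
  case True
  then have "F x \<le> F (-a)"
    using F_le_iff_left[of x "-a"] assms xplus_bounds by simp
  then show ?thesis
    using F_eq_left[of "-a"] by (simp add: algebra_simps)
next
  case False
  then have "F x \<le> F a"
    using F_le_iff_right[of x a] assms xplus_bounds by simp
  moreover have "(1 - \<alpha>) * a \<le> (1 + \<alpha>) * a"
    using alpha_nonneg a_pos by (intro mult_right_mono) auto
  ultimately show ?thesis
    using F_eq_right[of a] by simp
qed

lemma slice_nonempty_iff: "slice c \<noteq> {} \<longleftrightarrow> 0 \<le> c \<and> c \<le> (1 + \<alpha>) * a"
proof
  assume "slice c \<noteq> {}"
  then obtain x where x: "x \<in> slice c"
    by blast
  have "0 \<le> c"
    using x crossings_ordered_imp_nonneg unfolding mem_slice_iff by auto
  moreover have "c \<le> (1 + \<alpha>) * a"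
    using x F_le_on_support[of x] unfolding mem_slice_iff by auto
  ultimately show "0 \<le> c \<and> c \<le> (1 + \<alpha>) * a"
    by simp
next
  assume c: "0 \<le> c \<and> c \<le> (1 + \<alpha>) * a"
  then have "- c / (1 + \<alpha>) \<in> slice c"
    using F_ge_lines(2)[of "- c / (1 + \<alpha>)"] crossings_sign[of c] left_crossing_ge_iff[of c] a_pos
    unfolding mem_slice_iff minus_one_plus_alpha_mult by linarith
  then show "slice c \<noteq> {}"
    by blast
qed

lemma slice_below_min:
  assumes "0 \<le> c" "c \<le> F xp"
  shows "slice c = {- c / (1 + \<alpha>)..c / (1 - \<alpha>)}"
proof -
  have "c \<le> (1 + \<alpha>) * a" "c \<le> (1 - \<alpha>) * a"
    using assms F_xplus_le[of "-a"] F_xplus_le[of a] F_eq_left[of "-a"] F_eq_right[of a] a_pos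
    by (auto simp: algebra_simps)
  then have "-a \<le> - c / (1 + \<alpha>)" "c / (1 - \<alpha>) \<le> a"
    using left_crossing_ge_iff right_crossing_le_iff by simp_all
  moreover have "c \<le> F x" for x
    using assms(2) F_xplus_le[of x] by simp
  ultimately have "x \<in> slice c \<longleftrightarrow> x \<in> {- c / (1 + \<alpha>)..c / (1 - \<alpha>)}" for x
    unfolding mem_slice_iff atLeastAtMost_iff by (meson order_trans)
  then show ?thesis
    by (rule set_eqI)
qed

lemma slice_above_min:
  assumes "F xp < c" "c \<le> (1 + \<alpha>) * a"
  shows "- c / (1 + \<alpha>) \<le> Finv_left c" "Finv_left c < Finv c"
    and "slice c = {- c / (1 + \<alpha>)..Finv_left c} \<union> {Finv c..min (c / (1 - \<alpha>)) a}"
proof -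
  define l lo hi where "l = Finv_left c" and "lo = - c / (1 + \<alpha>)" and "hi = c / (1 - \<alpha>)"
  have l: "l \<le> xp" "F l = c"
    using Finv_left_spec[of c] assms unfolding l_def by auto
  have r: "xp \<le> Finv c" "F (Finv c) = c" "Finv c \<le> hi"
    using Finv_spec[of c] Finv_le[of c] assms unfolding hi_def by auto
  have "lo \<le> 0"
    using assms F_xplus_pos alpha_factors_pos unfolding lo_def by simp
  have "-a \<le> lo"
    using assms(2) left_crossing_ge_iff unfolding lo_def by simp
  have "c \<le> F lo"
    using F_ge_lines(2)[of lo] unfolding lo_def minus_one_plus_alpha_mult .
  then show "lo \<le> l"
    using F_le_iff_left[of l lo] l \<open>lo \<le> 0\<close> xplus_nonneg by simp
  have "xp < Finv c"
    using r assms by (cases "Finv c = xp") auto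
  then show "l < Finv c"
    using l by simp
  have "x \<in> slice c \<longleftrightarrow> x \<in> {lo..l} \<union> {Finv c..min hi a}" for x
  proof (cases "x \<le> xp")
    case True
    then show ?thesis
      using F_le_iff_left[of l x] l r \<open>xp < Finv c\<close> \<open>-a \<le> lo\<close> \<open>lo \<le> l\<close> xplus_bounds
      unfolding mem_slice_iff lo_def[symmetric] hi_def[symmetric] by auto
  next
    case False
    then show ?thesis
      using F_le_iff_right[of "Finv c" x] l r \<open>lo \<le> 0\<close> xplus_nonneg
      unfolding mem_slice_iff lo_def[symmetric] hi_def[symmetric] by auto
  qed
  then show "slice c = {- c / (1 + \<alpha>)..Finv_left c} \<union> {Finv c..min (c / (1 - \<alpha>)) a}"
    unfolding lo_def hi_def l_def by (rule set_eqI)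
qed

text \<open>The right end of the shaken slice on the line \<open>y = \<alpha> x + c\<close> (see \<open>measure_slice\<close>).\<close>
definition shaken_end :: "real \<Rightarrow> real" where
  "shaken_end c = (if c \<le> F xp then c / (1 - \<alpha>) else h (Finv_left c))"

lemma measure_slice:
  assumes "slice c \<noteq> {}"
  shows "measure lebesgue (slice c) = shaken_end c + c / (1 + \<alpha>)"
proof -
  have c: "0 \<le> c" "c \<le> (1 + \<alpha>) * a"
    using assms slice_nonempty_iff by auto
  show ?thesis
  proof (cases "c \<le> F xp")
    case True
    have "- c / (1 + \<alpha>) \<le> 0" "0 \<le> c / (1 - \<alpha>)"
      using c alpha_factors_pos by simp_all
    then have "- c / (1 + \<alpha>) \<le> c / (1 - \<alpha>)"
      by linarith
    then show ?thesis
      using slice_below_min[OF c(1) True] True unfolding shaken_end_def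
      by (simp add: measure_completion)
  next
    case False
    then have "F xp < c"
      by simp
    define hi where "hi = c / (1 - \<alpha>)"
    have "max 0 (min hi a - Finv c) = hi - Finv c"
      using Finv_right_piece_length[of c] \<open>F xp < c\<close> unfolding hi_def by simp
    moreover have "shaken_end c = Finv_left c + hi - Finv c"
      using False Finv_left_spec[of c] h_eq[of "Finv_left c"] unfolding shaken_end_def hi_def by simp
    ultimately show ?thesis
      using measure_lebesgue_Icc_Un_Icc[OF slice_above_min(1,2)[OF \<open>F xp < c\<close> c(2)]]
      unfolding slice_above_min(3)[OF \<open>F xp < c\<close> c(2)] hi_def by simp
  qed
qed

lemma shaken_end_above_min: "F xp < c \<Longrightarrow> shaken_end c = h (Finv_left c)"
  by (simp add: shaken_end_def)

lemma shaken_end_le: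
  assumes "slice c \<noteq> {}"
  shows "shaken_end c \<le> c / (1 - \<alpha>) \<and> shaken_end c \<le> s"
proof (cases "c \<le> F xp")
  case True
  then show ?thesis
    using s_eq alpha_factors_pos by (simp add: shaken_end_def divide_right_mono)
next
  case False
  then have "F xp < c" "c \<le> (1 + \<alpha>) * a"
    using assms slice_nonempty_iff by auto
  then have "shaken_end c = Finv_left c + c / (1 - \<alpha>) - Finv c"
    using shaken_end_above_min Finv_left_spec[of c] h_eq[of "Finv_left c"] by simp
  moreover have "shaken_end c \<le> s"
    using shaken_end_above_min[OF \<open>F xp < c\<close>] h_le_iff[of "Finv_left c" xp] h_xplus
      Finv_left_spec[of c] \<open>F xp < c\<close> by simp
  ultimately show ?thesis
    using slice_above_min(2)[OF \<open>F xp < c\<close> \<open>c \<le> (1 + \<alpha>) * a\<close>] by simp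
qed

lemma mem_gr_g_affineD:
  assumes "(x, \<alpha> * x + c) \<in> gr g"
  shows "slice c \<noteq> {} \<and> - c / (1 + \<alpha>) \<le> x \<and> x \<le> shaken_end c"
proof -
  have x: "-a \<le> x" "x \<le> s" "\<bar>x\<bar> \<le> \<alpha> * x + c" "\<alpha> * x + c \<le> g x"
    using assms unfolding mem_gr_g_iff by auto
  then have crossings: "- c / (1 + \<alpha>) \<le> x" "x \<le> c / (1 - \<alpha>)"
    using abs_le_affine_iff[OF alpha_nonneg alpha_less_1] by auto
  define z where "z = tau x"
  have z: "z \<le> xp" "h z = x" "c \<le> F z"
    using tau_spec[OF x(2)] g_eq[OF x(2)] x(4) unfolding z_def by auto
  have "-a \<le> z"
    using h_le_iff[of "-a" z] h_eq_left[of "-a"] z x(1) xplus_bounds by simp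
  then have "c \<le> (1 + \<alpha>) * a"
    using z F_le_iff_left[of z "-a"] F_eq_left[of "-a"] xplus_bounds by (simp add: algebra_simps)
  then have "slice c \<noteq> {}"
    using crossings crossings_ordered_imp_nonneg slice_nonempty_iff by auto
  moreover have "x \<le> shaken_end c"
  proof (cases "c \<le> F xp")
    case True
    then show ?thesis
      using crossings by (simp add: shaken_end_def)
  next
    case False
    then have "z \<le> Finv_left c"
      using F_le_iff_left[of "Finv_left c" z] Finv_left_spec[of c] z by simp
    then show ?thesis
      using False h_le_iff[of z "Finv_left c"] Finv_left_spec[of c] z by (simp add: shaken_end_def)
  qed
  ultimately show ?thesis
    using crossings by simp
qed

lemma mem_gr_g_affineI:
  assumes "slice c \<noteq> {}" "- c / (1 + \<alpha>) \<le> x" "x \<le> shaken_end c"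
  shows "(x, \<alpha> * x + c) \<in> gr g"
proof -
  have c: "0 \<le> c" "c \<le> (1 + \<alpha>) * a"
    using assms slice_nonempty_iff by auto
  have "-a \<le> - c / (1 + \<alpha>)"
    using c(2) left_crossing_ge_iff by simp
  then have "-a \<le> x"
    using assms by linarith
  have "x \<le> s" "\<bar>x\<bar> \<le> \<alpha> * x + c"
    using assms shaken_end_le[of c] abs_le_affine_iff[OF alpha_nonneg alpha_less_1] by auto
  moreover have "c \<le> g x - \<alpha> * x"
  proof (cases "c \<le> F xp")
    case True
    then show ?thesis
      using g_minus_line_ge[of x] by simp
  next
    case False
    then have "F xp < c"
      by simp
    have "tau x \<le> Finv_left c"
      using h_le_iff[of "tau x" "Finv_left c"] tau_spec[OF \<open>x \<le> s\<close>] Finv_left_spec[of c] assms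
        shaken_end_above_min[OF \<open>F xp < c\<close>] \<open>F xp < c\<close> by simp
    then have "c \<le> F (tau x)"
      using F_le_iff_left[of "Finv_left c" "tau x"] tau_spec[OF \<open>x \<le> s\<close>] Finv_left_spec[of c]
        \<open>F xp < c\<close> by simp
    then show ?thesis
      using g_eq[OF \<open>x \<le> s\<close>] by simp
  qed
  ultimately show ?thesis
    using \<open>-a \<le> x\<close> unfolding mem_gr_g_iff by simp
qed

lemma mem_gr_g_affine_iff:
  "(x, \<alpha> * x + c) \<in> gr g \<longleftrightarrow> slice c \<noteq> {} \<and> - c / (1 + \<alpha>) \<le> x \<and> x \<le> shaken_end c"
  using mem_gr_g_affineD mem_gr_g_affineI by blast

lemma mem_Kslice_gr_f_iff:
  "(x, y) \<in> Kslice \<alpha> (gr f) (u, - u) \<longleftrightarrow> y = \<alpha> * x - (1 + \<alpha>) * u \<and> (x, y) \<in> gr g"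
proof -
  define c where "c = - (1 + \<alpha>) * u"
  have u: "u = - c / (1 + \<alpha>)"
  proof -
    have "1 + \<alpha> \<noteq> 0"
      using alpha_factors_pos by simp
    then show ?thesis
      unfolding c_def by (simp add: field_simps)
  qed
  have line: "\<alpha> * x - (1 + \<alpha>) * u = \<alpha> * x + c" "- u + \<alpha> * (x - u) = \<alpha> * x + c"
    unfolding c_def by (simp_all add: algebra_simps)
  have S: "{x. (x, \<alpha> * x - (1 + \<alpha>) * u) \<in> gr f} = slice c"
    unfolding slice_def c_def by (simp add: algebra_simps)
  show ?thesis
  proof (cases "slice c = {}")
    case True
    then show ?thesis
      using mem_gr_g_affine_iff[of x c] unfolding Kslice_eq_segment S line by auto
  next
    case False
    define L where "L = measure lebesgue (slice c)"
    have L: "0 \<le> L" "u + L = shaken_end c"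
      using measure_nonneg[of lebesgue "slice c"] measure_slice[OF False] u unfolding L_def
      by simp_all
    show ?thesis
      using mem_closed_segment_slope_iff[OF L(1), of x y u "- u" \<alpha>] mem_gr_g_affine_iff[of x c] False
      unfolding Kslice_eq_segment S L_def[symmetric] L(2) line by (auto simp: u)
  qed
qed

theorem shake_set_gr_f: "shake_set \<alpha> (gr f) = gr g"
proof (intro set_eqI)
  fix p :: "real \<times> real"
  obtain x y where p: "p = (x, y)"
    by fastforce
  have "p \<in> shake_set \<alpha> (gr f) \<longleftrightarrow> (\<exists>u. y = \<alpha> * x - (1 + \<alpha>) * u \<and> (x, y) \<in> gr g)"
    unfolding shake_set_def lineD_def p using mem_Kslice_gr_f_iff by blast
  also have "\<dots> \<longleftrightarrow> (x, y) \<in> gr g"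
    using alpha_factors_pos by (auto intro: exI[of _ "(\<alpha> * x - y) / (1 + \<alpha>)"])
  finally show "p \<in> shake_set \<alpha> (gr f) \<longleftrightarrow> p \<in> gr g"
    unfolding p .
qed

end

theorem theorem4p7:
  fixes a \<alpha> :: real and f :: "real \<Rightarrow> real"
  assumes "a > 0" and "0 \<le> \<alpha>" and "\<alpha> < 1" and "classC a f"
  shows "shake_set \<alpha> (gr f) = gr (shake_fun a \<alpha> f)"
proof -
  interpret classC_shaking a \<alpha> f
    using assms by unfold_locales
  show ?thesis
    by (rule shake_set_gr_f)
qed

end
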